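(* Fix a robot $k$ and a group $G_{\hat k}$, $\hat k\in\{1,\dots,m-1\}$, containing $k$, whose other members are $l_1,\dots,l_j$ with $j\ge 2$. Let $d>0$ and let $\mathrm{Rot}_{l_1,l_2,k}(\pi,\pi,0)$ denote any composition of the rotation-only operations $h_1,\dots,h_{m-1},f_m$ that changes the orientations of $l_1$ and $l_2$ by $\pi$ and that of $k$ by $0$ (mod $2\pi$), leaving all positions unchanged (such a composition exists). Then the sequence $P_1(d)=(g_{\hat k}(d),\,\mathrm{Rot}_{l_1,l_2,k}(\pi,\pi,0),\,g_{\hat k}(d))$ has the following net effect: every robot not in $G_{\hat k}$ has unchanged position; robots $l_1$ and $l_2$ end at their initial positions; robot $k$ is translated by $2d(\cos\theta_k,\sin\theta_k)$ (with $\theta_k$ its initial orientation) and has unchanged orientation. Thus only robots among $l_3,\dots,l_j,k$ can change position.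
   Context: A swarm of $n$ planar robots; robot $j$ has state $(x_j,y_j,\theta_j)$, $\theta_j$ mod $2\pi$; all robots have the same turning radius $r>0$. Groups $G_1,\dots,G_m$ with activation vectors $\alpha_i\in\{0,1\}^n$ ($\alpha_{i,j}=1$ iff robot $j\in G_i$); the patterns $(\alpha_{1,j},\dots,\alpha_{m-1,j})$ are pairwise distinct, none all zeros, none all ones; $G_m=\emptyset$. Dynamics: one group $\nu(t)$ active at a time, input $u(t)>0$; with $a_j=\alpha_{\nu(t),j}$: $\dot x_j=a_j\cos\theta_j u$, $\dot y_j=a_j\sin\theta_j u$, $\dot\theta_j=(1-a_j)u/r$. $f_m(\varphi)$ = activate $G_m$ with $\int u\,dt=r\varphi$ (all robots rotate in place by $\varphi$). $h_i(\varphi)$ ($i<m$): an activation sequence whose net effect leaves members of $G_i$ unchanged and keeps non-members in place with orientation increased by $\varphi$ mod $2\pi$. $g_i(d)$ ($i<m$, $d\in\mathbb R$): an activation sequence whose net effect translates each member $j$ of $G_i$ by $d(\cos\theta_j,\sin\theta_j)$ with unchanged orientation and leaves non-members unchanged. Sequences are executed left to right. *)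

theory Defs
  imports Complex_Main
begin

text \<open>A configuration assigns to every robot index j its state (x_j, y_j, theta_j).
  Orientations are real numbers compared modulo 2 pi.\<close>
type_synonym config = "nat \<Rightarrow> real \<times> real \<times> real"

definition px :: "config \<Rightarrow> nat \<Rightarrow> real" where "px c j = fst (c j)"
definition py :: "config \<Rightarrow> nat \<Rightarrow> real" where "py c j = fst (snd (c j))"
definition th :: "config \<Rightarrow> nat \<Rightarrow> real" where "th c j = snd (snd (c j))"

definition cong2pi :: "real \<Rightarrow> real \<Rightarrow> bool" where
  "cong2pi a b \<longleftrightarrow> (\<exists>z::int. a - b = 2 * pi * of_int z)"

text \<open>Activation vectors: alpha i j \<longleftrightarrow> robot j is a member of group G_i.\<close>
type_synonym activation = "nat \<Rightarrow> nat \<Rightarrow> bool"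

definition valid_groups :: "nat \<Rightarrow> nat \<Rightarrow> activation \<Rightarrow> bool" where
  "valid_groups n m \<alpha> \<longleftrightarrow> m \<ge> 2 \<and>
     (\<forall>j<n. \<forall>j'<n. j \<noteq> j' \<longrightarrow> (\<exists>i\<in>{1..<m}. \<alpha> i j \<noteq> \<alpha> i j')) \<and>
     (\<forall>j<n. \<exists>i\<in>{1..<m}. \<alpha> i j) \<and>
     (\<forall>j<n. \<exists>i\<in>{1..<m}. \<not> \<alpha> i j) \<and>
     (\<forall>j. \<not> \<alpha> m j)"

definition gEff :: "activation \<Rightarrow> nat \<Rightarrow> real \<Rightarrow> config \<Rightarrow> config" where
  "gEff \<alpha> i d c = (\<lambda>j. if \<alpha> i j
      then (px c j + d * cos (th c j), py c j + d * sin (th c j), th c j) else c j)"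

definition hEff :: "activation \<Rightarrow> nat \<Rightarrow> real \<Rightarrow> config \<Rightarrow> config" where
  "hEff \<alpha> i \<phi> c = (\<lambda>j. if \<alpha> i j then c j else (px c j, py c j, th c j + \<phi>))"

definition fEff :: "real \<Rightarrow> config \<Rightarrow> config" where
  "fEff \<phi> c = (\<lambda>j. (px c j, py c j, th c j + \<phi>))"

datatype rot_op = H nat real | F real

definition valid_rot_op :: "nat \<Rightarrow> rot_op \<Rightarrow> bool" where
  "valid_rot_op m op = (case op of H i \<phi> \<Rightarrow> 1 \<le> i \<and> i < m | F \<phi> \<Rightarrow> 0 < \<phi>)"

fun rot_step :: "activation \<Rightarrow> rot_op \<Rightarrow> config \<Rightarrow> config" where
  "rot_step \<alpha> (H i \<phi>) c = hEff \<alpha> i \<phi> c"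
| "rot_step \<alpha> (F \<phi>) c = fEff \<phi> c"

fun exec_rot :: "activation \<Rightarrow> rot_op list \<Rightarrow> config \<Rightarrow> config" where
  "exec_rot \<alpha> [] c = c"
| "exec_rot \<alpha> (op # ops) c = exec_rot \<alpha> ops (rot_step \<alpha> op c)"

definition is_Rot :: "nat \<Rightarrow> activation \<Rightarrow> nat \<Rightarrow> nat \<Rightarrow> nat \<Rightarrow> rot_op list \<Rightarrow> bool" where
  "is_Rot m \<alpha> l1 l2 k ops \<longleftrightarrow> (\<forall>op\<in>set ops. valid_rot_op m op) \<and>
     (\<forall>c. (\<forall>j. px (exec_rot \<alpha> ops c) j = px c j \<and> py (exec_rot \<alpha> ops c) j = py c j) \<and>
          cong2pi (th (exec_rot \<alpha> ops c) l1) (th c l1 + pi) \<and>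
          cong2pi (th (exec_rot \<alpha> ops c) l2) (th c l2 + pi) \<and>
          cong2pi (th (exec_rot \<alpha> ops c) k) (th c k))"

definition P1 :: "activation \<Rightarrow> nat \<Rightarrow> real \<Rightarrow> rot_op list \<Rightarrow> config \<Rightarrow> config" where
  "P1 \<alpha> kh d ops c = gEff \<alpha> kh d (exec_rot \<alpha> ops (gEff \<alpha> kh d c))"

end

theory Submission
  imports Defs
begin

text \<open>A rotation-only
  sequence keeps every position and only adds a fixed angle to each heading; if it turns l1
  and l2 by pi and k by 0, the second g(d) carries l1, l2 back along the reversed heading while
  k advances a second time. Such a sequence exists: two groups separating k from l1 and k from
  l2 give half-turns h_i(pi), and together with f_m(pi) some choice among them turns k an even
  and l1, l2 an odd number of times.\<close>

fun rot_angle :: "activation \<Rightarrow> rot_op \<Rightarrow> nat \<Rightarrow> real" where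
  "rot_angle \<alpha> (H i \<phi>) j = (if \<alpha> i j then 0 else \<phi>)"
| "rot_angle \<alpha> (F \<phi>) j = \<phi>"

lemma exec_rot_state:
  "exec_rot \<alpha> ops c j = (px c j, py c j, th c j + (\<Sum>op\<leftarrow>ops. rot_angle \<alpha> op j))"
proof (induction ops arbitrary: c)
  case Nil
  then show ?case by (simp add: px_def py_def th_def)
next
  case (Cons op ops)
  then show ?case
    by (cases op) (simp_all add: hEff_def fEff_def px_def py_def th_def)
qed

lemma px_exec_rot [simp]: "px (exec_rot \<alpha> ops c) j = px c j"
  and py_exec_rot [simp]: "py (exec_rot \<alpha> ops c) j = py c j"
  and th_exec_rot: "th (exec_rot \<alpha> ops c) j = th c j + (\<Sum>op\<leftarrow>ops. rot_angle \<alpha> op j)"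
  by (simp_all add: exec_rot_state px_def py_def th_def)

lemma px_gEff [simp]: "px (gEff \<alpha> i d c) j = (if \<alpha> i j then px c j + d * cos (th c j) else px c j)"
  and py_gEff [simp]: "py (gEff \<alpha> i d c) j = (if \<alpha> i j then py c j + d * sin (th c j) else py c j)"
  and th_gEff [simp]: "th (gEff \<alpha> i d c) j = th c j"
  by (simp_all add: gEff_def px_def py_def th_def)

lemma cos_sin_cong2pi:
  assumes "cong2pi a b"
  shows "cos a = cos b \<and> sin a = sin b"
proof -
  obtain z :: int where "a = b + 2 * pi * of_int z"
    using assms by (auto simp: cong2pi_def algebra_simps)
  then show ?thesis by (simp add: cos_add sin_add cos_int_2pin sin_int_2pin)
qed

lemma cong2pi_add_pi_even:
  assumes "even N"
  shows "cong2pi (t + pi * real N) t"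
proof -
  obtain q where "N = 2 * q" using assms by blast
  then have "t + pi * real N - t = 2 * pi * of_int (int q)" by simp
  then show ?thesis unfolding cong2pi_def by blast
qed

lemma cong2pi_add_pi_odd:
  assumes "odd N"
  shows "cong2pi (t + pi * real N) (t + pi)"
proof -
  obtain q where "N = 2 * q + 1" using assms oddE by blast
  then have "t + pi * real N - (t + pi) = 2 * pi * of_int (int q)" by (simp add: algebra_simps)
  then show ?thesis unfolding cong2pi_def by blast
qed

definition half_turns :: "nat list \<Rightarrow> bool \<Rightarrow> rot_op list" where
  "half_turns is w = map (\<lambda>i. H i pi) is @ (if w then [F pi] else [])"

definition half_turn_count :: "activation \<Rightarrow> nat list \<Rightarrow> bool \<Rightarrow> nat \<Rightarrow> nat" where
  "half_turn_count \<alpha> is w j = length (filter (\<lambda>i. \<not> \<alpha> i j) is) + of_bool w"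

lemma rot_angle_half_turns:
  "(\<Sum>op\<leftarrow>half_turns is w. rot_angle \<alpha> op j) = pi * real (half_turn_count \<alpha> is w j)"
  by (induction "is") (auto simp: half_turns_def half_turn_count_def algebra_simps)

lemma half_turn_parity_exists:
  assumes "\<alpha> A k \<noteq> \<alpha> A l1" and "\<alpha> B k \<noteq> \<alpha> B l2"
  shows "\<exists>is w. set is \<subseteq> {A, B} \<and> even (half_turn_count \<alpha> is w k) \<and>
    odd (half_turn_count \<alpha> is w l1) \<and> odd (half_turn_count \<alpha> is w l2)"
proof -
  consider "\<alpha> A l1 = \<alpha> A l2" | "\<alpha> B l1 = \<alpha> B l2" | "\<alpha> A k = \<alpha> A l2" "\<alpha> B k = \<alpha> B l1"
    using assms by blast
  then show ?thesis
  proof cases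
    case 1
    \<comment> \<open>h_A(pi) turns k alone or l1, l2 alone; in the first case f_m(pi) fixes the parities.\<close>
    then show ?thesis using assms
      by (intro exI[of _ "[A]"] exI[of _ "\<not> \<alpha> A k"]) (auto simp: half_turn_count_def)
  next
    case 2
    then show ?thesis using assms
      by (intro exI[of _ "[B]"] exI[of _ "\<not> \<alpha> B k"]) (auto simp: half_turn_count_def)
  next
    case 3
    \<comment> \<open>Now h_A(pi) turns l1 or {k, l2}, and h_B(pi) turns l2 or {k, l1}.\<close>
    then show ?thesis using assms
      by (intro exI[of _ "[A, B]"] exI[of _ "\<alpha> A l1 \<noteq> \<alpha> B l2"])
        (auto simp: half_turn_count_def)
  qed
qed

lemma is_Rot_half_turns:
  assumes "set is \<subseteq> {1..<m}"
    and "even (half_turn_count \<alpha> is w k)"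
    and "odd (half_turn_count \<alpha> is w l1)" and "odd (half_turn_count \<alpha> is w l2)"
  shows "is_Rot m \<alpha> l1 l2 k (half_turns is w)"
  unfolding is_Rot_def th_exec_rot rot_angle_half_turns
  using assms cong2pi_add_pi_even cong2pi_add_pi_odd
  by (auto simp: valid_rot_op_def half_turns_def)

lemma is_Rot_exists:
  assumes "valid_groups n m \<alpha>"
    and "k < n" and "l1 < n" and "l2 < n" and "l1 \<noteq> k" and "l2 \<noteq> k"
  shows "\<exists>ops. is_Rot m \<alpha> l1 l2 k ops"
proof -
  obtain A where A: "A \<in> {1..<m}" "\<alpha> A k \<noteq> \<alpha> A l1"
    using assms unfolding valid_groups_def by metis
  obtain B where B: "B \<in> {1..<m}" "\<alpha> B k \<noteq> \<alpha> B l2"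
    using assms unfolding valid_groups_def by metis
  obtain "is" w where "set is \<subseteq> {A, B}" and "even (half_turn_count \<alpha> is w k)"
    and "odd (half_turn_count \<alpha> is w l1)" and "odd (half_turn_count \<alpha> is w l2)"
    using half_turn_parity_exists[OF A(2) B(2)] by blast
  moreover have "set is \<subseteq> {1..<m}" using calculation(1) A(1) B(1) by blast
  ultimately show ?thesis using is_Rot_half_turns by blast
qed

lemma P1_position_nonmember:
  assumes "\<not> \<alpha> kh j"
  shows "px (P1 \<alpha> kh d ops c) j = px c j \<and> py (P1 \<alpha> kh d ops c) j = py c j"
  using assms by (simp add: P1_def)

lemma P1_position_reversed_member:
  assumes "\<alpha> kh j"
    and "cong2pi (th (exec_rot \<alpha> ops (gEff \<alpha> kh d c)) j) (th c j + pi)"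
  shows "px (P1 \<alpha> kh d ops c) j = px c j \<and> py (P1 \<alpha> kh d ops c) j = py c j"
  using assms cos_sin_cong2pi[OF assms(2)] by (simp add: P1_def)

lemma P1_state_fixed_member:
  assumes "\<alpha> kh j"
    and "cong2pi (th (exec_rot \<alpha> ops (gEff \<alpha> kh d c)) j) (th c j)"
  shows "px (P1 \<alpha> kh d ops c) j = px c j + 2 * d * cos (th c j)"
    and "py (P1 \<alpha> kh d ops c) j = py c j + 2 * d * sin (th c j)"
    and "cong2pi (th (P1 \<alpha> kh d ops c) j) (th c j)"
  using assms cos_sin_cong2pi[OF assms(2)] by (simp_all add: P1_def)

theorem mainTheorem5:
  fixes n m kh k l1 l2 :: nat and \<alpha> :: activation and d :: real
  assumes "valid_groups n m \<alpha>"
    and "1 \<le> kh" and "kh < m"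
    and "k < n" and "l1 < n" and "l2 < n"
    and "\<alpha> kh k" and "\<alpha> kh l1" and "\<alpha> kh l2"
    and "l1 \<noteq> l2" and "l1 \<noteq> k" and "l2 \<noteq> k"
    and "d > 0"
  shows "(\<exists>ops. is_Rot m \<alpha> l1 l2 k ops) \<and>
    (\<forall>ops c. is_Rot m \<alpha> l1 l2 k ops \<longrightarrow>
       (let c' = P1 \<alpha> kh d ops c in
         (\<forall>j<n. \<not> \<alpha> kh j \<longrightarrow> px c' j = px c j \<and> py c' j = py c j) \<and>
         px c' l1 = px c l1 \<and> py c' l1 = py c l1 \<and>
         px c' l2 = px c l2 \<and> py c' l2 = py c l2 \<and>
         px c' k = px c k + 2 * d * cos (th c k) \<and>
         py c' k = py c k + 2 * d * sin (th c k) \<and>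
         cong2pi (th c' k) (th c k)))"
proof (intro conjI allI impI)
  show "\<exists>ops. is_Rot m \<alpha> l1 l2 k ops"
    using is_Rot_exists assms(1,4-6,11,12) by blast
next
  fix ops c
  assume "is_Rot m \<alpha> l1 l2 k ops"
  then have "cong2pi (th (exec_rot \<alpha> ops (gEff \<alpha> kh d c)) l1) (th c l1 + pi)"
    and "cong2pi (th (exec_rot \<alpha> ops (gEff \<alpha> kh d c)) l2) (th c l2 + pi)"
    and "cong2pi (th (exec_rot \<alpha> ops (gEff \<alpha> kh d c)) k) (th c k)"
    unfolding is_Rot_def by (metis th_gEff)+
  then show "let c' = P1 \<alpha> kh d ops c in
         (\<forall>j<n. \<not> \<alpha> kh j \<longrightarrow> px c' j = px c j \<and> py c' j = py c j) \<and>
         px c' l1 = px c l1 \<and> py c' l1 = py c l1 \<and>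
         px c' l2 = px c l2 \<and> py c' l2 = py c l2 \<and>
         px c' k = px c k + 2 * d * cos (th c k) \<and>
         py c' k = py c k + 2 * d * sin (th c k) \<and>
         cong2pi (th c' k) (th c k)"
    using assms(7-9) P1_position_nonmember P1_position_reversed_member P1_state_fixed_member
    by (simp add: Let_def)
qed

end
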